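(* Every linear operator $A:\mathbb{R}^n\to\mathbb{R}^n$ similar to an operator that is GTP (respectively, GSTP) with respect to some totally positive structure is itself GTP (respectively, GSTP) with respect to some totally positive structure. In particular, if $A$ is similar to an operator with a totally positive (respectively, strictly totally positive) matrix, then $A$ is GTP (respectively, GSTP) with respect to some totally positive structure.
   Context: A proper cone is a closed convex cone that is pointed and solid. $\wedge^j\mathbb{R}^n$ is the $j$th exterior power and $\wedge^jA$ the operator with $(\wedge^jA)(x_1\wedge\cdots\wedge x_j)=Ax_1\wedge\cdots\wedge Ax_j$. $B$ is $K$-nonnegative if $BK\subseteq K$ and $K$-positive if $B(K\setminus\{0\})\subseteq\operatorname{int}K$. A totally positive structure is a family $\{K_1,\ldots,K_n\}$, $K_j\subset\wedge^j\mathbb{R}^n$ a proper cone; $A$ is GTP (GSTP) with respect to it if $\wedge^jA$ is $K_j$-nonnegative ($K_j$-positive) for all $j=1,\ldots,n$. A matrix is totally positive (TP) if all its minors of every order are nonnegative, and strictly totally positive (STP) if all its minors of every order are positive (i.e. all compound matrices are entrywise nonnegative, resp. positive). *)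

theory Defs
  imports "HOL-Analysis.Analysis" "HOL-Combinatorics.Permutations"
begin

text \<open>The operator on R^n is given by its
  matrix A (type real^n^n) in the standard basis e_1,...,e_n, where the
  index type 'n is finite and linearly ordered (the order fixes the ordering of the
  standard basis).  The j-th exterior power is modelled in the basis
  e_I = e_{i_1} wedge ... wedge e_{i_j} (i_1 < ... < i_j, I = {i_1,...,i_j}) as the
  subspace ext_space j of (real, 'n set) vec of vectors supported on j-element sets.\<close>

definition ext_space :: "nat \<Rightarrow> ((real, ('n::finite) set) vec) set" where
  "ext_space j = {v. \<forall>I. card I \<noteq> j \<longrightarrow> v $ I = 0}"

definition minor :: "((real, ('n::{finite,linorder})) vec, 'n) vec \<Rightarrow> 'n set \<Rightarrow> 'n set \<Rightarrow> real" where
  "minor A I J = (\<Sum>p | p permutes {..<card I}. of_int (sign p) *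
       (\<Prod>k<card I. A $ (sorted_list_of_set I ! k) $ (sorted_list_of_set J ! p k)))"

text \<open>Matrix of the j-th exterior power of A with respect to the basis (e_I),
  i.e. the j-th compound matrix (extended by 0 off the j-element index sets).\<close>
definition compound :: "nat \<Rightarrow> ((real, ('n::{finite,linorder})) vec, 'n) vec \<Rightarrow> ((real, 'n set) vec, 'n set) vec" where
  "compound j A = (\<chi> I J. if card I = j \<and> card J = j then minor A I J else 0)"

definition proper_cone_ext :: "nat \<Rightarrow> ((real, ('n::finite) set) vec) set \<Rightarrow> bool" where
  "proper_cone_ext j K \<longleftrightarrow> K \<subseteq> ext_space j \<and> closed K \<and> convex K \<and> cone K \<and>
     K \<inter> uminus ` K = {0} \<and> (top_of_set (ext_space j) interior_of K) \<noteq> {}"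

definition int_ext :: "nat \<Rightarrow> ((real, ('n::finite) set) vec) set \<Rightarrow> ((real, 'n set) vec) set" where
  "int_ext j K = top_of_set (ext_space j) interior_of K"

definition totally_positive_structure :: "(nat \<Rightarrow> ((real, ('n::finite) set) vec) set) \<Rightarrow> bool" where
  "totally_positive_structure K \<longleftrightarrow> (\<forall>j\<in>{1..CARD('n)}. proper_cone_ext j (K j))"

definition K_nonneg :: "real^'m^'m \<Rightarrow> (real^'m) set \<Rightarrow> bool" where
  "K_nonneg B K \<longleftrightarrow> (\<forall>x\<in>K. B *v x \<in> K)"

definition K_pos :: "nat \<Rightarrow> ((real, ('n::finite) set) vec, 'n set) vec \<Rightarrow> ((real, 'n set) vec) set \<Rightarrow> bool" where
  "K_pos j B K \<longleftrightarrow> (\<forall>x\<in>K - {0}. B *v x \<in> int_ext j K)"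

definition GTP :: "((real, ('n::{finite,linorder})) vec, 'n) vec \<Rightarrow> (nat \<Rightarrow> ((real, 'n set) vec) set) \<Rightarrow> bool" where
  "GTP A K \<longleftrightarrow> (\<forall>j\<in>{1..CARD('n)}. K_nonneg (compound j A) (K j))"

definition GSTP :: "((real, ('n::{finite,linorder})) vec, 'n) vec \<Rightarrow> (nat \<Rightarrow> ((real, 'n set) vec) set) \<Rightarrow> bool" where
  "GSTP A K \<longleftrightarrow> (\<forall>j\<in>{1..CARD('n)}. K_pos j (compound j A) (K j))"

definition similar_op :: "((real, ('n::finite)) vec, 'n) vec \<Rightarrow> ((real, 'n) vec, 'n) vec \<Rightarrow> bool" where
  "similar_op A B \<longleftrightarrow> (\<exists>P. invertible P \<and> A = P ** B ** matrix_inv P)"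

definition TP_matrix :: "((real, ('n::{finite,linorder})) vec, 'n) vec \<Rightarrow> bool" where
  "TP_matrix B \<longleftrightarrow> (\<forall>I J::'n set. 1 \<le> card I \<and> card I = card J \<longrightarrow> 0 \<le> minor B I J)"

definition STP_matrix :: "((real, ('n::{finite,linorder})) vec, 'n) vec \<Rightarrow> bool" where
  "STP_matrix B \<longleftrightarrow> (\<forall>I J::'n set. 1 \<le> card I \<and> card I = card J \<longrightarrow> 0 < minor B I J)"

end

theory Submission
  imports Defs
begin

text \<open>If \<open>A = P B P\<inverse>\<close>, the Cauchy--Binet formula makes the compounds multiplicative, so
  \<open>\<wedge>\<^sup>jA = (\<wedge>\<^sup>jP) (\<wedge>\<^sup>jB) (\<wedge>\<^sup>jP)\<inverse>\<close>. Transporting each cone \<open>K\<^sub>j\<close> by the linear isomorphism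
  \<open>\<wedge>\<^sup>jP\<close> of \<open>\<wedge>\<^sup>j\<real>\<^sup>n\<close> gives again a proper cone, and \<open>\<wedge>\<^sup>jA\<close> acts on it as \<open>\<wedge>\<^sup>jB\<close> acts on \<open>K\<^sub>j\<close>.
  For a (strictly) totally positive \<open>B\<close> the nonnegative orthants of the exterior powers, taken in
  the basis \<open>e\<^sub>I\<close>, form a totally positive structure for which \<open>B\<close> is GTP (GSTP), because the
  compound matrices of \<open>B\<close> are entrywise nonnegative (positive).\<close>

definition det_nat :: "nat \<Rightarrow> (nat \<Rightarrow> nat \<Rightarrow> 'a::comm_ring_1) \<Rightarrow> 'a" where
  "det_nat m M = (\<Sum>p | p permutes {..<m}. of_int (sign p) * (\<Prod>k<m. M k (p k)))"

lemma det_nat_cong: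
  assumes "\<And>k l. k < m \<Longrightarrow> l < m \<Longrightarrow> M k l = N k l"
  shows "det_nat m M = det_nat m N"
  unfolding det_nat_def
proof (rule sum.cong[OF refl])
  fix p assume "p \<in> {p. p permutes {..<m}}"
  then have "k < m \<Longrightarrow> p k < m" for k using permutes_in_image[of p "{..<m}" k] by simp
  then show "of_int (sign p) * (\<Prod>k<m. M k (p k)) = of_int (sign p) * (\<Prod>k<m. N k (p k))"
    using assms by simp
qed

lemma det_nat_transpose: "det_nat m (\<lambda>k l. M l k) = det_nat m M"
proof -
  have "det_nat m (\<lambda>k l. M l k) = (\<Sum>p | p permutes {..<m}. of_int (sign (inv p)) * (\<Prod>k<m. M (inv p k) k))"
    unfolding det_nat_def by (rule sum_permutations_inverse)
  also have "\<dots> = det_nat m M"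
    unfolding det_nat_def
  proof (rule sum.cong[OF refl])
    fix p assume "p \<in> {p. p permutes {..<m}}"
    then have p: "p permutes {..<m}" by simp
    have "(\<Prod>k<m. M (inv p k) k) = (\<Prod>k<m. M k (p k))"
      using prod.permute[OF p, of "\<lambda>k. M (inv p k) k"] permutes_inverses(2)[OF p] by (simp add: o_def)
    moreover have "sign (inv p) = sign p"
      using sign_inverse[OF permutes_imp_permutation[OF finite_lessThan p]] .
    ultimately show "of_int (sign (inv p)) * (\<Prod>k<m. M (inv p k) k) = of_int (sign p) * (\<Prod>k<m. M k (p k))"
      by simp
  qed
  finally show ?thesis .
qed

lemma det_nat_permute_cols:
  assumes s: "s permutes {..<m}"
  shows "det_nat m (\<lambda>k l. M k (s l)) = of_int (sign s) * det_nat m M"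
proof -
  have "det_nat m (\<lambda>k l. M k (s l)) =
      (\<Sum>p | p permutes {..<m}. of_int (sign (inv s \<circ> p)) * (\<Prod>k<m. M k (s ((inv s \<circ> p) k))))"
    unfolding det_nat_def by (rule setum_permutations_compose_left[OF permutes_inv[OF s]])
  also have "\<dots> = (\<Sum>p | p permutes {..<m}. of_int (sign s) * (of_int (sign p) * (\<Prod>k<m. M k (p k))))"
  proof (rule sum.cong[OF refl])
    fix p assume "p \<in> {p. p permutes {..<m}}"
    then have "permutation p" by (simp add: permutes_imp_permutation[OF finite_lessThan])
    moreover have "permutation s" using s by (simp add: permutes_imp_permutation[OF finite_lessThan])
    ultimately have "sign (inv s \<circ> p) = sign s * sign p"
      by (simp add: sign_compose sign_inverse permutation_inverse)
    moreover have "s ((inv s \<circ> p) k) = p k" for k using permutes_inverses(1)[OF s] by simp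
    ultimately show "of_int (sign (inv s \<circ> p)) * (\<Prod>k<m. M k (s ((inv s \<circ> p) k))) =
        of_int (sign s) * (of_int (sign p) * (\<Prod>k<m. M k (p k)))"
      by simp
  qed
  finally show ?thesis by (simp add: det_nat_def sum_distrib_left)
qed

lemma det_nat_permute_rows:
  assumes "s permutes {..<m}"
  shows "det_nat m (\<lambda>k l. M (s k) l) = of_int (sign s) * det_nat m M"
proof -
  have "det_nat m (\<lambda>k l. M (s k) l) = det_nat m (\<lambda>k l. M (s l) k)"
    by (rule det_nat_transpose[symmetric])
  also have "\<dots> = of_int (sign s) * det_nat m (\<lambda>k l. M l k)"
    by (rule det_nat_permute_cols[OF assms])
  finally show ?thesis using det_nat_transpose[of m M] by simp
qed

text \<open>The sort restriction is what lets \<open>d = - d\<close> force \<open>d = 0\<close>.\<close>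

lemma det_nat_identical_rows:
  fixes M :: "nat \<Rightarrow> nat \<Rightarrow> 'a::{idom,ring_char_0}"
  assumes "i < m" "j < m" "i \<noteq> j" "\<And>l. M i l = M j l"
  shows "det_nat m M = 0"
proof -
  let ?q = "Transposition.transpose i j"
  have "?q permutes {..<m}" using assms by (intro permutes_swap_id) auto
  from det_nat_permute_rows[OF this, of M] assms(3)
  have "det_nat m (\<lambda>k l. M (?q k) l) = - det_nat m M" by (simp add: sign_swap_id)
  moreover have "(\<lambda>k l. M (?q k) l) = M"
    using assms(4) by (auto simp: Transposition.transpose_def fun_eq_iff)
  ultimately have "det_nat m M + det_nat m M = 0" by (simp add: eq_neg_iff_add_eq_0)
  then show ?thesis by (metis mult_2 mult_eq_0_iff zero_neq_numeral)
qed

lemma det_nat_zero_row: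
  assumes "k < m" "\<And>l. M k l = 0"
  shows "det_nat m M = 0"
  unfolding det_nat_def
proof (intro sum.neutral ballI)
  fix p show "of_int (sign p) * (\<Prod>k<m. M k (p k)) = 0"
    using assms by (subst prod_zero) auto
qed

lemma det_nat_delta: "det_nat m (\<lambda>k l. if k = l then 1 else 0) = (1::'a::comm_ring_1)"
proof -
  have delta: "of_int (sign p) * (\<Prod>k<m. if k = p k then 1 else 0) = (if p = id then 1 else (0::'a::comm_ring_1))"
    if "p \<in> {p. p permutes {..<m}}" for p
  proof (cases "p = id")
    case False
    then obtain k where k: "p k \<noteq> k" by (auto simp: fun_eq_iff)
    then have "k < m" using permutes_not_in[of p "{..<m}" k] that by auto
    with k have "(\<Prod>k<m. if k = p k then 1 else 0) = (0::'a)"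
      by (intro prod_zero) (auto intro!: bexI[of _ k])
    then show ?thesis using False by (metis mult_zero_right)
  qed simp
  have "det_nat m (\<lambda>k l. if k = l then 1 else 0) = (\<Sum>p | p permutes {..<m}. if p = id then 1 else (0::'a))"
    unfolding det_nat_def by (rule sum.cong[OF refl delta])
  also have "\<dots> = 1"
    by (simp add: finite_permutations permutes_id)
  finally show ?thesis .
qed

section \<open>The Cauchy--Binet formula\<close>

lemma bij_betw_permutes_enumerations:
  fixes L :: "'a::linorder set"
  assumes "finite L" "card L = m"
  defines "s \<equiv> sorted_list_of_set L"
  shows "bij_betw (\<lambda>\<sigma>. restrict (\<lambda>k. s ! \<sigma> k) {..<m}) {\<sigma>. \<sigma> permutes {..<m}}
           {f \<in> {..<m} \<rightarrow>\<^sub>E UNIV. bij_betw f {..<m} L}"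
proof -
  have s: "bij_betw ((!) s) {..<m} L"
    using assms by (intro bij_betw_nth) auto
  define rank where "rank f k = (if k < m then the_inv_into {..<m} ((!) s) (f k) else k)" for f k
  show ?thesis
  proof (rule bij_betw_byWitness[where f' = rank])
    show "\<forall>\<sigma>\<in>{\<sigma>. \<sigma> permutes {..<m}}. rank (restrict (\<lambda>k. s ! \<sigma> k) {..<m}) = \<sigma>"
    proof clarify
      fix \<sigma> assume \<sigma>: "\<sigma> permutes {..<m}"
      have "k < m \<Longrightarrow> \<sigma> k < m" for k using permutes_in_image[OF \<sigma>, of k] by simp
      then show "rank (restrict (\<lambda>k. s ! \<sigma> k) {..<m}) = \<sigma>"
        using s permutes_not_in[OF \<sigma>]
        by (auto simp: rank_def fun_eq_iff bij_betw_def the_inv_into_f_f)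
    qed
    show "\<forall>f\<in>{f \<in> {..<m} \<rightarrow>\<^sub>E UNIV. bij_betw f {..<m} L}. restrict (\<lambda>k. s ! rank f k) {..<m} = f"
    proof clarify
      fix f assume f: "f \<in> {..<m} \<rightarrow>\<^sub>E UNIV" "bij_betw f {..<m} L"
      have "k < m \<Longrightarrow> f k \<in> (!) s ` {..<m}" for k
        using bij_betw_imp_surj_on[OF f(2)] bij_betw_imp_surj_on[OF s] by blast
      then have "k < m \<Longrightarrow> s ! rank f k = f k" for k
        using bij_betw_imp_inj_on[OF s] by (simp add: rank_def f_the_inv_into_f)
      then show "restrict (\<lambda>k. s ! rank f k) {..<m} = f"
        using PiE_arb[OF f(1)] by (auto simp: fun_eq_iff)
    qed
    show "(\<lambda>\<sigma>. restrict (\<lambda>k. s ! \<sigma> k) {..<m}) ` {\<sigma>. \<sigma> permutes {..<m}}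
        \<subseteq> {f \<in> {..<m} \<rightarrow>\<^sub>E UNIV. bij_betw f {..<m} L}"
    proof (rule image_subsetI)
      fix \<sigma> assume "\<sigma> \<in> {\<sigma>. \<sigma> permutes {..<m}}"
      then have "bij_betw ((!) s \<circ> \<sigma>) {..<m} L"
        using s by (intro bij_betw_trans) (auto simp: permutes_imp_bij)
      then show "restrict (\<lambda>k. s ! \<sigma> k) {..<m} \<in> {f \<in> {..<m} \<rightarrow>\<^sub>E UNIV. bij_betw f {..<m} L}"
        by (simp add: comp_def)
    qed
    show "rank ` {f \<in> {..<m} \<rightarrow>\<^sub>E UNIV. bij_betw f {..<m} L} \<subseteq> {\<sigma>. \<sigma> permutes {..<m}}"
    proof (rule image_subsetI)
      fix f assume "f \<in> {f \<in> {..<m} \<rightarrow>\<^sub>E UNIV. bij_betw f {..<m} L}"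
      then have "bij_betw (the_inv_into {..<m} ((!) s) \<circ> f) {..<m} {..<m}"
        using s by (auto intro: bij_betw_trans bij_betw_the_inv_into)
      moreover have "k \<in> {..<m} \<Longrightarrow> (the_inv_into {..<m} ((!) s) \<circ> f) k = rank f k" for k
        by (simp add: rank_def)
      ultimately have "bij_betw (rank f) {..<m} {..<m}"
        using bij_betw_cong by blast
      then show "rank f \<in> {\<sigma>. \<sigma> permutes {..<m}}"
        by (intro CollectI bij_imp_permutes) (simp_all add: rank_def)
    qed
  qed
qed

lemma det_nat_matrix_mult_injections:
  fixes X :: "'a::{idom,ring_char_0}^'n::finite^'m" and Y :: "'a^'p^'n"
  shows "det_nat m (\<lambda>k l. (X ** Y) $ r k $ c l) =
    (\<Sum>f \<in> {f \<in> {..<m} \<rightarrow>\<^sub>E UNIV. inj_on f {..<m}}.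
       (\<Prod>k<m. X $ r k $ f k) * det_nat m (\<lambda>k l. Y $ f k $ c l))"
    (is "_ = (\<Sum>f \<in> ?Inj. ?g f)")
proof -
  let ?F = "{..<m} \<rightarrow>\<^sub>E (UNIV :: 'n set)"
  have "det_nat m (\<lambda>k l. (X ** Y) $ r k $ c l) =
     (\<Sum>p | p permutes {..<m}. of_int (sign p) * (\<Prod>k<m. \<Sum>i\<in>UNIV. X $ r k $ i * Y $ i $ c (p k)))"
    by (simp add: det_nat_def matrix_matrix_mult_def)
  also have "\<dots> = (\<Sum>p | p permutes {..<m}. \<Sum>f\<in>?F.
      (\<Prod>k<m. X $ r k $ f k) * (of_int (sign p) * (\<Prod>k<m. Y $ f k $ c (p k))))"
    by (simp add: prod_sum_PiE sum_distrib_left prod.distrib mult.left_commute)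
  also have "\<dots> = (\<Sum>f\<in>?F. ?g f)"
    by (subst sum.swap) (simp add: det_nat_def sum_distrib_left)
  also have "\<dots> = (\<Sum>f\<in>?Inj. ?g f)"
  proof (rule sum.mono_neutral_right)
    show "\<forall>f\<in>?F - ?Inj. ?g f = 0"
    proof
      fix f assume "f \<in> ?F - ?Inj"
      then obtain i j where "i < m" "j < m" "i \<noteq> j" "f i = f j" unfolding inj_on_def by auto
      then show "?g f = 0" by (simp add: det_nat_identical_rows[of i m j])
    qed
  qed (auto simp: finite_PiE)
  finally show ?thesis .
qed

theorem Cauchy_Binet_det_nat:
  fixes X :: "'a::{idom,ring_char_0}^'n::{finite,linorder}^'m" and Y :: "'a^'p^'n::{finite,linorder}"
  shows "det_nat m (\<lambda>k l. (X ** Y) $ r k $ c l) =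
    (\<Sum>L | card L = m. det_nat m (\<lambda>k l. X $ r k $ (sorted_list_of_set L ! l)) *
                       det_nat m (\<lambda>k l. Y $ (sorted_list_of_set L ! k) $ c l))"
proof -
  let ?Inj = "{f \<in> {..<m} \<rightarrow>\<^sub>E (UNIV :: 'n set). inj_on f {..<m}}"
  let ?g = "\<lambda>f. (\<Prod>k<m. X $ r k $ f k) * det_nat m (\<lambda>k l. Y $ f k $ c l)"
  have "(\<Sum>f\<in>?Inj. ?g f) = (\<Sum>L | card L = m. \<Sum>f \<in> {f \<in> ?Inj. f ` {..<m} = L}. ?g f)"
  proof (rule sum.group[symmetric])
    show "(\<lambda>f. f ` {..<m}) ` ?Inj \<subseteq> {L. card L = m}"
    proof (rule image_subsetI)
      fix f assume "f \<in> ?Inj"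
      then show "f ` {..<m} \<in> {L. card L = m}" by (simp add: card_image)
    qed
  qed (simp_all add: finite_PiE)
  also have "\<dots> = (\<Sum>L | card L = m. det_nat m (\<lambda>k l. X $ r k $ (sorted_list_of_set L ! l)) *
                       det_nat m (\<lambda>k l. Y $ (sorted_list_of_set L ! k) $ c l))"
  proof (rule sum.cong[OF refl])
    fix L :: "'n set" assume "L \<in> {L. card L = m}"
    then have L: "finite L" "card L = m" by auto
    define s where "s = sorted_list_of_set L"
    have "{f \<in> ?Inj. f ` {..<m} = L} = {f \<in> {..<m} \<rightarrow>\<^sub>E UNIV. bij_betw f {..<m} L}"
      by (auto simp: bij_betw_def)
    then have "(\<Sum>f \<in> {f \<in> ?Inj. f ` {..<m} = L}. ?g f) =
          (\<Sum>\<sigma> | \<sigma> permutes {..<m}. ?g (restrict (\<lambda>k. s ! \<sigma> k) {..<m}))"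
      using sum.reindex_bij_betw[OF bij_betw_permutes_enumerations[OF L], of ?g] by (simp add: s_def)
    also have "\<dots> = (\<Sum>\<sigma> | \<sigma> permutes {..<m}.
        of_int (sign \<sigma>) * (\<Prod>k<m. X $ r k $ (s ! \<sigma> k)) * det_nat m (\<lambda>k l. Y $ (s ! k) $ c l))"
    proof (rule sum.cong[OF refl])
      fix \<sigma> assume "\<sigma> \<in> {\<sigma>. \<sigma> permutes {..<m}}"
      then have "det_nat m (\<lambda>k l. Y $ (s ! \<sigma> k) $ c l) = of_int (sign \<sigma>) * det_nat m (\<lambda>k l. Y $ (s ! k) $ c l)"
        using det_nat_permute_rows[of \<sigma> m "\<lambda>k l. Y $ (s ! k) $ c l"] by simp
      moreover have "det_nat m (\<lambda>k l. Y $ restrict (\<lambda>k. s ! \<sigma> k) {..<m} k $ c l) =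
          det_nat m (\<lambda>k l. Y $ (s ! \<sigma> k) $ c l)"
        by (rule det_nat_cong) simp
      ultimately show "?g (restrict (\<lambda>k. s ! \<sigma> k) {..<m}) =
          of_int (sign \<sigma>) * (\<Prod>k<m. X $ r k $ (s ! \<sigma> k)) * det_nat m (\<lambda>k l. Y $ (s ! k) $ c l)"
        by (simp add: mult_ac)
    qed
    also have "\<dots> = det_nat m (\<lambda>k l. X $ r k $ (s ! l)) * det_nat m (\<lambda>k l. Y $ (s ! k) $ c l)"
      by (simp add: det_nat_def sum_distrib_right)
    finally show "(\<Sum>f \<in> {f \<in> ?Inj. f ` {..<m} = L}. ?g f) =
        det_nat m (\<lambda>k l. X $ r k $ (sorted_list_of_set L ! l)) * det_nat m (\<lambda>k l. Y $ (sorted_list_of_set L ! k) $ c l)"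
      by (simp add: s_def)
  qed
  finally show ?thesis by (simp add: det_nat_matrix_mult_injections)
qed

lemma minor_eq_det_nat:
  "minor A I J = det_nat (card I) (\<lambda>k l. A $ (sorted_list_of_set I ! k) $ (sorted_list_of_set J ! l))"
  by (simp add: minor_def det_nat_def)

lemma compound_matrix_mult:
  fixes X Y :: "((real, 'n::{finite,linorder}) vec, 'n) vec"
  shows "compound j (X ** Y) = compound j X ** compound j Y"
proof -
  have "compound j (X ** Y) $ I $ J = (compound j X ** compound j Y) $ I $ J" for I J :: "'n set"
  proof (cases "card I = j \<and> card J = j")
    case True
    have "(compound j X ** compound j Y) $ I $ J = (\<Sum>L | card L = j. minor X I L * minor Y L J)"
      using True by (simp add: matrix_matrix_mult_def compound_def sum.If_cases if_distrib if_distribR)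
    also have "\<dots> = minor (X ** Y) I J"
      using True by (simp add: minor_eq_det_nat Cauchy_Binet_det_nat)
    finally show ?thesis using True by (simp add: compound_def)
  next
    case False
    then show ?thesis by (auto simp: compound_def matrix_matrix_mult_def)
  qed
  then show ?thesis by (simp add: vec_eq_iff)
qed

lemma minor_mat_1:
  assumes "card I = card J"
  shows "minor (mat 1 :: ((real, 'n::{finite,linorder}) vec, 'n) vec) I J = (if I = J then 1 else 0)"
proof -
  define sI where "sI = sorted_list_of_set I"
  define sJ where "sJ = sorted_list_of_set J"
  have sI: "length sI = card I" "distinct sI" "set sI = I" and sJ: "length sJ = card J" "set sJ = J"
    by (simp_all add: sI_def sJ_def)
  have minor: "minor (mat 1 :: ((real, 'n) vec, 'n) vec) I J = det_nat (card I) (\<lambda>k l. if sI ! k = sJ ! l then 1 else 0)"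
    by (simp add: minor_eq_det_nat mat_def sI_def sJ_def)
  show ?thesis
  proof (cases "I = J")
    case True
    then have "det_nat (card I) (\<lambda>k l. if sI ! k = sJ ! l then 1 else 0) =
        det_nat (card I) (\<lambda>k l. if k = l then 1 else 0)"
      using sI by (intro det_nat_cong) (simp add: sI_def sJ_def nth_eq_iff_index_eq)
    then show ?thesis using True minor by (simp add: det_nat_delta)
  next
    case False
    have "\<not> I \<subseteq> J"
      using False assms card_subset_eq[of J I] by auto
    then obtain i where "i \<in> I" "i \<notin> J" by blast
    then obtain k where k: "k < card I" "sI ! k \<notin> J"
      using sI by (metis in_set_conv_nth)
    have "det_nat (card I) (\<lambda>k l. if sI ! k = sJ ! l then 1 else 0) =
        det_nat (card I) (\<lambda>k' l. if k' = k then 0 else if sI ! k' = sJ ! l then 1 else 0)"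
      using k nth_mem[of _ sJ] sJ assms by (intro det_nat_cong) auto
    also have "\<dots> = 0" by (rule det_nat_zero_row[OF k(1)]) simp
    finally show ?thesis using False minor by simp
  qed
qed

lemma compound_mat_1_mult_vec:
  assumes "v \<in> ext_space j"
  shows "compound j (mat 1 :: ((real, 'n::{finite,linorder}) vec, 'n) vec) *v v = v"
proof -
  have "(compound j (mat 1 :: ((real, 'n) vec, 'n) vec) *v v) $ I = v $ I" for I
  proof (cases "card I = j")
    case True
    then have "(compound j (mat 1 :: ((real, 'n) vec, 'n) vec) *v v) $ I = (\<Sum>J\<in>UNIV. if J = I then v $ J else 0)"
      unfolding matrix_vector_mult_def compound_def vec_lambda_beta
      by (intro sum.cong) (auto simp: minor_mat_1)
    also have "\<dots> = v $ I" by (simp add: sum.delta')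
    finally show ?thesis .
  next
    case False
    then show ?thesis using assms by (simp add: matrix_vector_mult_def compound_def ext_space_def)
  qed
  then show ?thesis by (simp add: vec_eq_iff)
qed

lemma compound_mult_vec_in_ext_space:
  "compound j (M :: ((real, 'n::{finite,linorder}) vec, 'n) vec) *v x \<in> ext_space j"
  by (simp add: ext_space_def matrix_vector_mult_def compound_def)

lemma subspace_ext_space: "subspace (ext_space j)"
  unfolding subspace_def ext_space_def by auto

context
  fixes j :: nat and h g :: "(real, 'n::finite set) vec \<Rightarrow> (real, 'n set) vec"
  assumes linear: "linear h" "linear g"
    and maps: "\<And>v. v \<in> ext_space j \<Longrightarrow> h v \<in> ext_space j" "\<And>v. v \<in> ext_space j \<Longrightarrow> g v \<in> ext_space j"
    and inverse: "\<And>v. v \<in> ext_space j \<Longrightarrow> g (h v) = v" "\<And>v. v \<in> ext_space j \<Longrightarrow> h (g v) = v"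
begin

lemma image_eq_ext_space_Int_vimage:
  assumes "T \<subseteq> ext_space j"
  shows "h ` T = ext_space j \<inter> g -` T"
proof
  show "h ` T \<subseteq> ext_space j \<inter> g -` T" using assms maps inverse by auto
  show "ext_space j \<inter> g -` T \<subseteq> h ` T"
  proof
    fix y assume "y \<in> ext_space j \<inter> g -` T"
    then show "y \<in> h ` T" using inverse(2)[of y] by (metis IntD1 IntD2 image_eqI vimageD)
  qed
qed

lemma int_ext_linear_image:
  assumes "K \<subseteq> ext_space j"
  shows "h ` int_ext j K \<subseteq> int_ext j (h ` K)"
  unfolding int_ext_def
proof (rule interior_of_maximal)
  let ?U = "top_of_set (ext_space j) interior_of K"
  have "?U \<subseteq> K" by (rule interior_of_subset)
  then show "h ` ?U \<subseteq> h ` K" by blast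
  have "continuous_on (ext_space j) g"
    using linear(2) by (simp add: linear_continuous_on linear_conv_bounded_linear)
  then have "openin (top_of_set (ext_space j)) (ext_space j \<inter> g -` ?U)"
    using maps(2) by (intro continuous_openin_preimage[of _ _ "ext_space j"] openin_interior_of) auto
  then show "openin (top_of_set (ext_space j)) (h ` ?U)"
    using image_eq_ext_space_Int_vimage \<open>?U \<subseteq> K\<close> assms by auto
qed

lemma proper_cone_ext_linear_image:
  assumes K: "proper_cone_ext j K"
  shows "proper_cone_ext j (h ` K)"
  unfolding proper_cone_ext_def
proof (intro conjI)
  have KS: "K \<subseteq> ext_space j" and pointed: "K \<inter> uminus ` K = {0}"
    using K by (auto simp: proper_cone_ext_def)
  show "h ` K \<subseteq> ext_space j" using KS maps(1) by auto
  have "closed (g -` K)"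
    using K linear(2) by (intro continuous_closed_vimage)
      (auto simp: proper_cone_ext_def linear_continuous_at linear_conv_bounded_linear)
  moreover have "closed (ext_space j :: (real, 'n set) vec set)"
    by (rule closed_subspace[OF subspace_ext_space])
  ultimately show "closed (h ` K)"
    using image_eq_ext_space_Int_vimage[OF KS] by (simp add: closed_Int)
  show "convex (h ` K)" using K linear(1) by (simp add: proper_cone_ext_def convex_linear_image)
  have "cone K" using K by (simp add: proper_cone_ext_def)
  then have "conic (h ` K)"
    using linear(1) by (intro conic_linear_image) (simp_all add: cone_def conic_def)
  then show "cone (h ` K)" by (simp add: cone_def conic_def)
  show "h ` K \<inter> uminus ` h ` K = {0}"
  proof
    have "0 \<in> h ` K" using pointed linear_0[OF linear(1)] by (metis IntD1 image_eqI singletonI)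
    moreover from this have "0 \<in> uminus ` h ` K" by (metis image_eqI minus_zero)
    ultimately show "{0} \<subseteq> h ` K \<inter> uminus ` h ` K" by blast
    show "h ` K \<inter> uminus ` h ` K \<subseteq> {0}"
    proof
      fix y assume "y \<in> h ` K \<inter> uminus ` h ` K"
      then obtain x z where xz: "x \<in> K" "z \<in> K" "y = h x" "y = - h z" by blast
      have "x = g y" using xz KS inverse(1) by auto
      moreover have "g y = - z"
      proof -
        have "g y = - g (h z)" using xz(4) linear_neg[OF linear(2)] by simp
        also have "\<dots> = - z" using xz KS inverse(1) by auto
        finally show ?thesis .
      qed
      ultimately have "x \<in> K \<inter> uminus ` K" using xz by auto
      then show "y \<in> {0}" using pointed xz linear_0[OF linear(1)] by auto
    qed
  qed
  show "top_of_set (ext_space j) interior_of h ` K \<noteq> {}"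
    using K int_ext_linear_image[OF KS] by (auto simp: proper_cone_ext_def int_ext_def)
qed

end

section \<open>Transport of totally positive structures along similarities\<close>

lemma similar_opE:
  assumes "similar_op A B"
  obtains P Q where "P ** Q = mat 1" "Q ** P = mat 1" "A = P ** B ** Q"
proof -
  obtain P where P: "invertible P" "A = P ** B ** matrix_inv P"
    using assms unfolding similar_op_def by blast
  from P(1) have "P ** matrix_inv P = mat 1 \<and> matrix_inv P ** P = mat 1"
    unfolding invertible_def matrix_inv_def by (rule someI_ex)
  with P that show ?thesis by blast
qed

lemma compound_inverse_mult_vec:
  fixes P Q :: "((real, 'n::{finite,linorder}) vec, 'n) vec"
  assumes "P ** Q = mat 1" "v \<in> ext_space j"
  shows "compound j P *v (compound j Q *v v) = v"
  using assms by (simp add: matrix_vector_mul_assoc compound_matrix_mult[symmetric] compound_mat_1_mult_vec)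

lemma compound_similar_mult_vec:
  fixes A B P Q :: "((real, 'n::{finite,linorder}) vec, 'n) vec"
  assumes "Q ** P = mat 1" "A = P ** B ** Q" "v \<in> ext_space j"
  shows "compound j A *v (compound j P *v v) = compound j P *v (compound j B *v v)"
proof -
  have "compound j A = compound j P ** compound j B ** compound j Q"
    using assms(2) by (simp add: compound_matrix_mult)
  then have "compound j A *v (compound j P *v v) =
      (compound j P ** compound j B) *v (compound j Q *v (compound j P *v v))"
    by (simp add: matrix_vector_mul_assoc matrix_mul_assoc)
  also have "\<dots> = (compound j P ** compound j B) *v v"
    using compound_inverse_mult_vec[OF assms(1,3)] by simp
  finally show ?thesis by (simp add: matrix_vector_mul_assoc)
qed

definition structure_image ::
    "((real, 'n::{finite,linorder}) vec, 'n) vec \<Rightarrow> (nat \<Rightarrow> (real, 'n set) vec set) \<Rightarrow> nat \<Rightarrow> (real, 'n set) vec set"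
  where
  "structure_image P K j = (\<lambda>v. compound j P *v v) ` K j"

context
  fixes P Q :: "((real, 'n::{finite,linorder}) vec, 'n) vec"
    and K :: "nat \<Rightarrow> (real, 'n set) vec set"
  assumes inverse: "P ** Q = mat 1" "Q ** P = mat 1"
    and K: "totally_positive_structure K"
begin

lemma proper_cone_ext_structure_image:
  assumes "j \<in> {1..CARD('n)}"
  shows "proper_cone_ext j (structure_image P K j)"
    and "(\<lambda>v. compound j P *v v) ` int_ext j (K j) \<subseteq> int_ext j (structure_image P K j)"
proof -
  have Kj: "proper_cone_ext j (K j)"
    using K assms by (simp add: totally_positive_structure_def)
  then have KS: "K j \<subseteq> ext_space j" by (simp add: proper_cone_ext_def)
  show "proper_cone_ext j (structure_image P K j)"
    unfolding structure_image_def
    by (rule proper_cone_ext_linear_image[OF matrix_vector_mul_linear matrix_vector_mul_linear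
          compound_mult_vec_in_ext_space compound_mult_vec_in_ext_space
          compound_inverse_mult_vec[OF inverse(2)] compound_inverse_mult_vec[OF inverse(1)] Kj])
  show "(\<lambda>v. compound j P *v v) ` int_ext j (K j) \<subseteq> int_ext j (structure_image P K j)"
    unfolding structure_image_def
    by (rule int_ext_linear_image[OF matrix_vector_mul_linear matrix_vector_mul_linear
          compound_mult_vec_in_ext_space compound_mult_vec_in_ext_space
          compound_inverse_mult_vec[OF inverse(2)] compound_inverse_mult_vec[OF inverse(1)] KS])
qed

lemma totally_positive_structure_image: "totally_positive_structure (structure_image P K)"
  using proper_cone_ext_structure_image(1) by (simp add: totally_positive_structure_def)

context
  fixes A B :: "((real, 'n::{finite,linorder}) vec, 'n) vec"
  assumes similar: "A = P ** B ** Q"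
begin

lemma GTP_structure_image:
  assumes "GTP B K"
  shows "GTP A (structure_image P K)"
  unfolding GTP_def K_nonneg_def
proof (intro ballI)
  fix j y assume j: "j \<in> {1..CARD('n)}" and "y \<in> structure_image P K j"
  then obtain x where x: "x \<in> K j" "y = compound j P *v x" by (auto simp: structure_image_def)
  have "x \<in> ext_space j"
    using x K j by (auto simp: totally_positive_structure_def proper_cone_ext_def)
  moreover have "compound j B *v x \<in> K j"
    using assms j x by (simp add: GTP_def K_nonneg_def)
  ultimately show "compound j A *v y \<in> structure_image P K j"
    using x compound_similar_mult_vec[OF inverse(2) similar] by (simp add: structure_image_def)
qed

lemma GSTP_structure_image:
  assumes "GSTP B K"
  shows "GSTP A (structure_image P K)"
  unfolding GSTP_def K_pos_def
proof (intro ballI)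
  fix j y assume j: "j \<in> {1..CARD('n)}" and y: "y \<in> structure_image P K j - {0}"
  then obtain x where x: "x \<in> K j" "y = compound j P *v x" by (auto simp: structure_image_def)
  have "x \<noteq> 0" using x y by auto
  have "x \<in> ext_space j"
    using x K j by (auto simp: totally_positive_structure_def proper_cone_ext_def)
  moreover have "compound j B *v x \<in> int_ext j (K j)"
    using assms j x \<open>x \<noteq> 0\<close> by (simp add: GSTP_def K_pos_def)
  ultimately show "compound j A *v y \<in> int_ext j (structure_image P K j)"
    using x compound_similar_mult_vec[OF inverse(2) similar] proper_cone_ext_structure_image(2)[OF j]
    by auto
qed

end

end

lemma similar_op_GTP:
  assumes "similar_op A B" "totally_positive_structure K" "GTP B K"
  shows "\<exists>K'. totally_positive_structure K' \<and> GTP A K'"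
proof -
  obtain P Q where "P ** Q = mat 1" "Q ** P = mat 1" "A = P ** B ** Q"
    using assms(1) by (rule similar_opE)
  then show ?thesis
    using assms(2,3) totally_positive_structure_image GTP_structure_image by blast
qed

lemma similar_op_GSTP:
  assumes "similar_op A B" "totally_positive_structure K" "GSTP B K"
  shows "\<exists>K'. totally_positive_structure K' \<and> GSTP A K'"
proof -
  obtain P Q where "P ** Q = mat 1" "Q ** P = mat 1" "A = P ** B ** Q"
    using assms(1) by (rule similar_opE)
  then show ?thesis
    using assms(2,3) totally_positive_structure_image GSTP_structure_image by blast
qed

section \<open>The orthant structure\<close>

definition orthant_structure :: "nat \<Rightarrow> (real, 'n::finite set) vec set" where
  "orthant_structure j = {v \<in> ext_space j. \<forall>I. 0 \<le> v $ I}"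

lemma positive_in_int_ext_orthant:
  fixes v :: "(real, 'n::finite set) vec"
  assumes "v \<in> ext_space j" "\<And>I. card I = j \<Longrightarrow> 0 < v $ I"
  shows "v \<in> int_ext j (orthant_structure j)"
proof -
  let ?U = "{w \<in> ext_space j. \<forall>I. card I = j \<longrightarrow> 0 < w $ I} :: (real, 'n set) vec set"
  have "?U = ext_space j \<inter> {x. \<forall>I. x $ I \<in> (if card I = j then {0<..} else UNIV)}"
    by auto
  then have "openin (top_of_set (ext_space j)) ?U"
    by (simp add: openin_open_Int open_vector_box)
  moreover have "?U \<subseteq> orthant_structure j"
    by (auto simp: orthant_structure_def ext_space_def) (metis less_eq_real_def)
  ultimately have "?U \<subseteq> int_ext j (orthant_structure j)"
    unfolding int_ext_def by (rule interior_of_maximal[rotated])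
  then show ?thesis using assms by blast
qed

lemma proper_cone_ext_orthant: "proper_cone_ext j (orthant_structure j :: (real, 'n::finite set) vec set)"
  unfolding proper_cone_ext_def
proof (intro conjI)
  let ?K = "orthant_structure j :: (real, 'n set) vec set"
  show "?K \<subseteq> ext_space j" by (auto simp: orthant_structure_def)
  have "?K = ext_space j \<inter> {x. \<forall>I. 0 \<le> x $ I}" by (auto simp: orthant_structure_def)
  then show "closed ?K"
    by (simp add: closed_Int closed_subspace subspace_ext_space closed_positive_orthant)
  show "convex ?K" "cone ?K"
    by (auto simp: convex_def cone_def orthant_structure_def ext_space_def)
  show "?K \<inter> uminus ` ?K = {0}"
    by (force simp: orthant_structure_def ext_space_def vec_eq_iff intro: order.antisym)
  have "(\<chi> I. if card I = j then 1 else 0) \<in> int_ext j ?K"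
    by (rule positive_in_int_ext_orthant) (simp_all add: ext_space_def)
  then show "top_of_set (ext_space j) interior_of ?K \<noteq> {}" by (auto simp: int_ext_def)
qed

lemma totally_positive_structure_orthant: "totally_positive_structure orthant_structure"
  by (simp add: totally_positive_structure_def proper_cone_ext_orthant)

text \<open>\<open>TP_matrix\<close> constrains only nonempty minors, hence \<open>1 \<le> j\<close>.\<close>

lemma compound_nonneg_TP_matrix:
  fixes B :: "((real, 'n::{finite,linorder}) vec, 'n) vec"
  assumes "TP_matrix B" "1 \<le> j"
  shows "0 \<le> compound j B $ I $ J"
  using assms by (auto simp: compound_def TP_matrix_def)

lemma TP_matrix_imp_GTP_orthant:
  fixes B :: "((real, 'n::{finite,linorder}) vec, 'n) vec"
  assumes "TP_matrix B"
  shows "GTP B orthant_structure"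
  unfolding GTP_def K_nonneg_def
proof (intro ballI)
  fix j and x :: "(real, 'n set) vec" assume "j \<in> {1..CARD('n)}" "x \<in> orthant_structure j"
  then have "0 \<le> (compound j B *v x) $ I" for I
    using compound_nonneg_TP_matrix[OF assms]
    by (auto simp: matrix_vector_mult_def orthant_structure_def intro!: sum_nonneg)
  then show "compound j B *v x \<in> orthant_structure j"
    by (simp add: orthant_structure_def compound_mult_vec_in_ext_space)
qed

lemma STP_matrix_imp_GSTP_orthant:
  fixes B :: "((real, 'n::{finite,linorder}) vec, 'n) vec"
  assumes "STP_matrix B"
  shows "GSTP B orthant_structure"
  unfolding GSTP_def K_pos_def
proof (intro ballI)
  fix j and x :: "(real, 'n set) vec"
  assume j: "j \<in> {1..CARD('n)}" and x: "x \<in> orthant_structure j - {0}"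
  have pos: "card I = j \<Longrightarrow> card J = j \<Longrightarrow> 0 < compound j B $ I $ J" for I J
    using assms j by (simp add: compound_def STP_matrix_def)
  obtain J where "x $ J \<noteq> 0" using x by (auto simp: vec_eq_iff)
  then have J: "card J = j" "0 < x $ J"
    using x by (auto simp: orthant_structure_def ext_space_def order.order_iff_strict)
  have nonneg: "0 \<le> compound j B $ I $ J'" "0 \<le> x $ J'" for I J'
    using x pos by (auto simp: compound_def orthant_structure_def less_imp_le)
  have "0 < (compound j B *v x) $ I" if "card I = j" for I
    unfolding matrix_vector_mult_def vec_lambda_beta
    using mult_pos_pos[OF pos[OF that J(1)] J(2)] nonneg
    by (intro sum_pos2[of UNIV J]) auto
  then show "compound j B *v x \<in> int_ext j (orthant_structure j)"
    by (intro positive_in_int_ext_orthant compound_mult_vec_in_ext_space)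
qed

theorem proposition17:
  fixes A :: "((real, 'n::{finite,linorder}) vec, 'n) vec"
  shows "((\<exists>B K. similar_op A B \<and> totally_positive_structure K \<and> GTP B K)
            \<longrightarrow> (\<exists>K'. totally_positive_structure K' \<and> GTP A K'))
       \<and> ((\<exists>B K. similar_op A B \<and> totally_positive_structure K \<and> GSTP B K)
            \<longrightarrow> (\<exists>K'. totally_positive_structure K' \<and> GSTP A K'))
       \<and> ((\<exists>B. similar_op A B \<and> TP_matrix B)
            \<longrightarrow> (\<exists>K'. totally_positive_structure K' \<and> GTP A K'))
       \<and> ((\<exists>B. similar_op A B \<and> STP_matrix B)
            \<longrightarrow> (\<exists>K'. totally_positive_structure K' \<and> GSTP A K'))"
  using similar_op_GTP similar_op_GSTP totally_positive_structure_orthant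
    TP_matrix_imp_GTP_orthant STP_matrix_imp_GSTP_orthant
  by blast

end
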